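(* (a) If a topological $G$-system $(X,T)$ is CAM, then it is weakly CAM. (b) If a $\mathbb{Z}$-system $(X,T)$ is expansive and weakly CAM, then it is CAM.
   Context: Let $G$ be a countable discrete group. A topological $G$-system $(X,T)$ consists of a compact metric space $X$ and an action $T\colon G\to\mathrm{Homeo}(X)$, $g\mapsto T_g$; a $\mathbb{Z}$-system is given by one homeomorphism $T$. The system is topologically transitive if for all nonempty open $U,V\subseteq X$ there is $g\in G$ with $T_gU\cap V\neq\emptyset$; the action is faithful if $T_g=\mathrm{id}_X$ only when $g$ is the identity. A point is periodic if its $G$-orbit is finite. The system is chaotic almost minimal (CAM) if: (1) it is topologically transitive and the action is faithful; (2) the periodic points are dense in $X$; (3) every proper closed $T$-invariant subset of $X$ is finite. It is weakly CAM if (1) and (2) hold and (3') every point of $X$ has $G$-orbit that is either finite or dense in $X$. A $\mathbb{Z}$-system is expansive if there is $c>0$ such that for all $x\neq y$ there is $n\in\mathbb{Z}$ with $d(T^nx,T^ny)>c$. *)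

theory Defs
  imports "HOL-Analysis.Analysis" "HOL-Library.Countable"
begin

definition G_system :: "'x::metric_space set \<Rightarrow> ('g::{group_add,countable} \<Rightarrow> 'x \<Rightarrow> 'x) \<Rightarrow> bool" where
  "G_system X T \<longleftrightarrow> compact X
     \<and> (\<forall>g. homeomorphism X X (T g) (T (- g)))
     \<and> (\<forall>x\<in>X. T 0 x = x)
     \<and> (\<forall>g h. \<forall>x\<in>X. T (g + h) x = T g (T h x))"

definition orbit :: "('g \<Rightarrow> 'x \<Rightarrow> 'x) \<Rightarrow> 'x \<Rightarrow> 'x set" where
  "orbit T x = range (\<lambda>g. T g x)"

definition top_transitive :: "'x::metric_space set \<Rightarrow> ('g \<Rightarrow> 'x \<Rightarrow> 'x) \<Rightarrow> bool" where
  "top_transitive X T \<longleftrightarrow>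
     (\<forall>U V. openin (top_of_set X) U \<and> U \<noteq> {} \<and> openin (top_of_set X) V \<and> V \<noteq> {}
        \<longrightarrow> (\<exists>g. T g ` U \<inter> V \<noteq> {}))"

definition faithful :: "'x set \<Rightarrow> ('g::group_add \<Rightarrow> 'x \<Rightarrow> 'x) \<Rightarrow> bool" where
  "faithful X T \<longleftrightarrow> (\<forall>g. (\<forall>x\<in>X. T g x = x) \<longrightarrow> g = 0)"

definition periodic_points :: "'x set \<Rightarrow> ('g \<Rightarrow> 'x \<Rightarrow> 'x) \<Rightarrow> 'x set" where
  "periodic_points X T = {x\<in>X. finite (orbit T x)}"

definition invariant_set :: "('g \<Rightarrow> 'x \<Rightarrow> 'x) \<Rightarrow> 'x set \<Rightarrow> bool" where
  "invariant_set T A \<longleftrightarrow> (\<forall>g. T g ` A \<subseteq> A)"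

definition CAM :: "'x::metric_space set \<Rightarrow> ('g::{group_add,countable} \<Rightarrow> 'x \<Rightarrow> 'x) \<Rightarrow> bool" where
  "CAM X T \<longleftrightarrow> top_transitive X T \<and> faithful X T
     \<and> X \<subseteq> closure (periodic_points X T)
     \<and> (\<forall>A. closedin (top_of_set X) A \<and> A \<subset> X \<and> invariant_set T A \<longrightarrow> finite A)"

definition weakly_CAM :: "'x::metric_space set \<Rightarrow> ('g::{group_add,countable} \<Rightarrow> 'x \<Rightarrow> 'x) \<Rightarrow> bool" where
  "weakly_CAM X T \<longleftrightarrow> top_transitive X T \<and> faithful X T
     \<and> X \<subseteq> closure (periodic_points X T)
     \<and> (\<forall>x\<in>X. finite (orbit T x) \<or> X \<subseteq> closure (orbit T x))"

text \<open>The Z-action generated by a homeomorphism f of X with inverse f'.\<close>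
definition zact :: "('x \<Rightarrow> 'x) \<Rightarrow> ('x \<Rightarrow> 'x) \<Rightarrow> int \<Rightarrow> 'x \<Rightarrow> 'x" where
  "zact f f' n = (if n \<ge> 0 then f ^^ nat n else f' ^^ nat (- n))"

definition expansive :: "'x::metric_space set \<Rightarrow> ('x \<Rightarrow> 'x) \<Rightarrow> ('x \<Rightarrow> 'x) \<Rightarrow> bool" where
  "expansive X f f' \<longleftrightarrow> (\<exists>c>0. \<forall>x\<in>X. \<forall>y\<in>X. x \<noteq> y \<longrightarrow>
      (\<exists>n::int. dist (zact f f' n x) (zact f f' n y) > c))"

end

theory Submission
  imports Defs
begin

text \<open>
  (a) The closure of an infinite orbit is a closed invariant infinite set, so in a CAM system it
  is the whole space.

  (b) In a weakly CAM system every point of a proper closed invariant set A has finite orbit, so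
  it suffices to show that an expansive homeomorphism with expansivity constant c has no infinite
  compact invariant set A of periodic points. Take an accumulation point x of A and, for each N,
  a point y of A whose first N iterates stay c-close to those of x. Expansivity separates the
  periodic points x and y at a first positive time n, necessarily n > N, so the pair
  (f^n y, f^n x) is c-separated although its N preceding iterates are c-close.
  A limit of these pairs is c-separated but c-close at all negative times, hence, both points
  being periodic, at all times, contradicting expansivity.
\<close>

lemma funpow_in_closed: "(\<And>z. z \<in> Y \<Longrightarrow> g z \<in> Y) \<Longrightarrow> z \<in> Y \<Longrightarrow> (g ^^ k) z \<in> Y"
  by (induction k) auto

lemma continuous_on_funpow:
  assumes "continuous_on Y g" "g ` Y \<subseteq> Y"
  shows "continuous_on Y (g ^^ k)"
proof (induction k)
  case 0
  then show ?case by (simp add: continuous_on_id)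
next
  case (Suc k)
  have "(g ^^ k) ` Y \<subseteq> Y"
    using funpow_in_closed[of Y g] assms(2) by blast
  then have "continuous_on Y (g \<circ> (g ^^ k))"
    using Suc continuous_on_compose continuous_on_subset[OF assms(1)] by blast
  then show ?case by simp
qed

lemma islimpt_obtain_near_under_maps:
  fixes \<phi> :: "'i \<Rightarrow> 'a::metric_space \<Rightarrow> 'b::metric_space"
  assumes "x islimpt A" "A \<subseteq> S" "x \<in> S" "finite I" "e > 0"
    and cont: "\<And>i. i \<in> I \<Longrightarrow> continuous_on S (\<phi> i)"
  obtains y where "y \<in> A" "y \<noteq> x" "\<forall>i\<in>I. dist (\<phi> i y) (\<phi> i x) < e"
proof -
  have "\<forall>\<^sub>F z in at x within S. \<forall>i\<in>I. dist (\<phi> i z) (\<phi> i x) < e"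
  proof (rule eventually_ball_finite[OF \<open>finite I\<close>], rule ballI)
    fix i assume "i \<in> I"
    then have "(\<phi> i \<longlongrightarrow> \<phi> i x) (at x within S)"
      using cont \<open>x \<in> S\<close> continuous_on_def by blast
    then show "\<forall>\<^sub>F z in at x within S. dist (\<phi> i z) (\<phi> i x) < e"
      using tendstoD \<open>e > 0\<close> by blast
  qed
  then obtain d where "d > 0" and d: "\<And>z. z \<in> S \<Longrightarrow> z \<noteq> x \<Longrightarrow> dist z x < d \<Longrightarrow>
      \<forall>i\<in>I. dist (\<phi> i z) (\<phi> i x) < e"
    unfolding eventually_at by blast
  then obtain y where "y \<in> A" "y \<noteq> x" "dist y x < d"
    using \<open>x islimpt A\<close> unfolding islimpt_approachable by blast
  then show ?thesis
    using that d \<open>A \<subseteq> S\<close> by blast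
qed

section \<open>Invariant sets of G-systems\<close>

lemma orbit_subset_invariant_set: "invariant_set T A \<Longrightarrow> x \<in> A \<Longrightarrow> orbit T x \<subseteq> A"
  unfolding invariant_set_def orbit_def by blast

context
  fixes X :: "'x::metric_space set" and T :: "'g::{group_add,countable} \<Rightarrow> 'x \<Rightarrow> 'x"
  assumes sys: "G_system X T"
begin

lemma G_system_in: "x \<in> X \<Longrightarrow> T g x \<in> X"
  using sys unfolding G_system_def homeomorphism_def by blast

lemma G_system_continuous: "continuous_on X (T g)"
  using sys unfolding G_system_def homeomorphism_def by blast

lemma invariant_set_orbit:
  assumes "x \<in> X"
  shows "invariant_set T (orbit T x)"
proof -
  have "T g (T h x) = T (g + h) x" for g h
    using sys assms unfolding G_system_def by simp
  then show ?thesis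
    unfolding invariant_set_def orbit_def by auto
qed

lemma invariant_set_closure:
  assumes "A \<subseteq> X" "invariant_set T A"
  shows "invariant_set T (closure A)"
  unfolding invariant_set_def
proof
  fix g
  have "closure A \<subseteq> X"
    using assms(1) sys compact_imp_closed closure_minimal unfolding G_system_def by blast
  moreover have "T g ` A \<subseteq> closure A"
    using assms(2) closure_subset unfolding invariant_set_def by blast
  ultimately show "T g ` closure A \<subseteq> closure A"
    using image_closure_subset continuous_on_subset[OF G_system_continuous] by blast
qed

lemma CAM_imp_weakly_CAM:
  assumes cam: "CAM X T"
  shows "weakly_CAM X T"
proof -
  have "X \<subseteq> closure (orbit T x)" if "x \<in> X" "infinite (orbit T x)" for x
  proof (rule ccontr)
    let ?C = "closure (orbit T x)"
    assume "\<not> X \<subseteq> ?C"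
    have "orbit T x \<subseteq> X"
      using G_system_in \<open>x \<in> X\<close> unfolding orbit_def by blast
    moreover have "closed X"
      using sys compact_imp_closed unfolding G_system_def by blast
    ultimately have "?C \<subseteq> X"
      by (simp add: closure_minimal)
    then have "closedin (top_of_set X) ?C" "?C \<subset> X"
      using \<open>\<not> X \<subseteq> ?C\<close> closed_subset[of ?C X] by auto
    moreover have "invariant_set T ?C"
      using invariant_set_closure invariant_set_orbit \<open>orbit T x \<subseteq> X\<close> \<open>x \<in> X\<close> by blast
    ultimately have "finite ?C"
      using cam unfolding CAM_def by blast
    then show False
      using \<open>infinite (orbit T x)\<close> closure_subset finite_subset by blast
  qed
  then show ?thesis
    using cam unfolding CAM_def weakly_CAM_def by blast
qed

end

lemma weakly_CAM_finite_orbit_in_proper_invariant: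
  assumes "weakly_CAM X T" "closed A" "A \<subset> X" "invariant_set T A" "x \<in> A"
  shows "finite (orbit T x)"
proof (rule ccontr)
  assume "infinite (orbit T x)"
  then have "X \<subseteq> closure (orbit T x)"
    using assms(1,3,5) unfolding weakly_CAM_def by blast
  also have "\<dots> \<subseteq> A"
    using orbit_subset_invariant_set[OF assms(4,5)] \<open>closed A\<close> closure_minimal by blast
  finally show False
    using \<open>A \<subset> X\<close> by blast
qed

section \<open>The \<open>\<int>\<close>-action generated by a homeomorphism\<close>

locale homeomorphic_zsystem =
  fixes Y :: "'y::metric_space set" and f f' :: "'y \<Rightarrow> 'y"
  assumes hom: "homeomorphism Y Y f f'"
begin

lemma zact_in: "z \<in> Y \<Longrightarrow> zact f f' n z \<in> Y"
proof -
  have "\<And>z. z \<in> Y \<Longrightarrow> f z \<in> Y" "\<And>z. z \<in> Y \<Longrightarrow> f' z \<in> Y"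
    using hom unfolding homeomorphism_def by blast+
  then show "z \<in> Y \<Longrightarrow> zact f f' n z \<in> Y"
    using funpow_in_closed[of Y f] funpow_in_closed[of Y f'] unfolding zact_def by auto
qed

lemma zact_continuous: "continuous_on Y (zact f f' n)"
  using hom continuous_on_funpow[of Y f] continuous_on_funpow[of Y f']
  unfolding zact_def homeomorphism_def by auto

lemma zact_0 [simp]: "zact f f' 0 z = z"
  unfolding zact_def by simp

lemma zact_succ:
  assumes "z \<in> Y"
  shows "zact f f' (n + 1) z = f (zact f f' n z)"
proof -
  consider "n \<ge> 0" | "n = -1" | "n < -1"
    by linarith
  then show ?thesis
  proof cases
    case 1
    then have "nat (n + 1) = Suc (nat n)"
      by simp
    with 1 show ?thesis
      unfolding zact_def by simp
  next
    case 2
    then show ?thesis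
      using hom assms unfolding zact_def homeomorphism_def by simp
  next
    case 3
    then have "nat (- n) = Suc (nat (- (n + 1)))"
      by simp
    moreover have "(f' ^^ nat (- (n + 1))) z \<in> Y"
      using zact_in[OF assms, of "n + 1"] 3 unfolding zact_def by simp
    ultimately show ?thesis
      using 3 hom unfolding zact_def homeomorphism_def by simp
  qed
qed

lemma zact_pred:
  assumes "z \<in> Y"
  shows "zact f f' (n - 1) z = f' (zact f f' n z)"
proof -
  have "f' (zact f f' n z) = f' (f (zact f f' (n - 1) z))"
    using zact_succ[OF assms, of "n - 1"] by simp
  also have "\<dots> = zact f f' (n - 1) z"
    using hom zact_in[OF assms] unfolding homeomorphism_def by simp
  finally show ?thesis ..
qed

lemma zact_add:
  assumes "z \<in> Y"
  shows "zact f f' (m + n) z = zact f f' m (zact f f' n z)"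
proof (induction m rule: int_induct[where k = 0])
  case base
  then show ?case by simp
next
  case (step1 i)
  then show ?case
    using zact_succ[of _ "i + n"] zact_succ[of _ i] zact_in assms by (simp add: algebra_simps)
next
  case (step2 i)
  then show ?case
    using zact_pred[of _ "i + n"] zact_pred[of _ i] zact_in assms by (simp add: algebra_simps)
qed

lemma zact_period:
  assumes "z \<in> Y" "finite (orbit (zact f f') z)"
  obtains P where "P > 0" "zact f f' P z = z"
proof -
  let ?g = "\<lambda>k::nat. zact f f' (int k) z"
  have "range ?g \<subseteq> orbit (zact f f') z"
    unfolding orbit_def by auto
  then have "finite (range ?g)"
    using assms(2) finite_subset by blast
  then have "\<not> inj ?g"
    using finite_imageD by auto
  then obtain a b where "a < b" "?g a = ?g b"
    unfolding inj_def by (metis linorder_neqE_nat)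
  then have "zact f f' (int b - int a) z = zact f f' (- int a) (?g a)"
    using zact_add[OF assms(1), of "- int a" "int b"] by simp
  also have "\<dots> = z"
    using zact_add[OF assms(1), of "- int a" "int a"] by simp
  finally show ?thesis
    using that[of "int b - int a"] \<open>a < b\<close> by simp
qed

lemma zact_periodic_shift:
  assumes "z \<in> Y" "zact f f' P z = z"
  shows "zact f f' (j + k * P) z = zact f f' j z"
proof -
  have "zact f f' (k * P) z = z"
  proof (induction k rule: int_induct[where k = 0])
    case base
    then show ?case by simp
  next
    case (step1 i)
    then show ?case
      using zact_add[OF assms(1), of P "i * P"] assms(2) by (simp add: algebra_simps)
  next
    case (step2 i)
    then have "zact f f' ((i - 1) * P) z = zact f f' ((i - 1) * P) (zact f f' P z)"
      using assms(2) by simp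
    also have "\<dots> = z"
      using zact_add[OF assms(1), of "(i - 1) * P" P] step2 by (simp add: algebra_simps)
    finally show ?case .
  qed
  then show ?thesis
    using zact_add[OF assms(1), of j "k * P"] by simp
qed

lemma zact_common_period:
  assumes "x \<in> Y" "y \<in> Y" "finite (orbit (zact f f') x)" "finite (orbit (zact f f') y)"
  obtains P where "P > 0" "zact f f' P x = x" "zact f f' P y = y"
proof -
  obtain Px Py where "Px > 0" "zact f f' Px x = x" "Py > 0" "zact f f' Py y = y"
    using zact_period assms by metis
  then show ?thesis
    using that[of "Py * Px"] zact_periodic_shift[of x Px 0 Py] zact_periodic_shift[of y Py 0 Px]
      assms by (simp add: mult.commute)
qed

end

section \<open>Expansive homeomorphisms\<close>

locale expansive_zsystem = homeomorphic_zsystem +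
  fixes c :: real
  assumes expansivity_const_pos: "c > 0"
    and expansivity: "\<And>x y. x \<in> Y \<Longrightarrow> y \<in> Y \<Longrightarrow> x \<noteq> y \<Longrightarrow>
      \<exists>n. c < dist (zact f f' n x) (zact f f' n y)"
begin

lemma periodic_points_separated_in_future_and_past:
  assumes "x \<in> Y" "y \<in> Y" "x \<noteq> y"
    and "finite (orbit (zact f f') x)" "finite (orbit (zact f f') y)"
  shows "\<exists>n>0. c < dist (zact f f' n x) (zact f f' n y)"
    and "\<exists>n<0. c < dist (zact f f' n x) (zact f f' n y)"
proof -
  obtain P where "P > 0" and P: "zact f f' P x = x" "zact f f' P y = y"
    using zact_common_period assms by metis
  obtain j where j: "c < dist (zact f f' j x) (zact f f' j y)"
    using expansivity assms by blast
  \<comment> \<open>Shifting by multiples of a common period moves the separation time to either side of 0.\<close>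
  have shift: "c < dist (zact f f' (j + k * P) x) (zact f f' (j + k * P) y)" for k
    using j zact_periodic_shift assms P by simp
  have "(\<bar>j\<bar> + 1) * P \<ge> \<bar>j\<bar> + 1"
    using mult_left_mono[of 1 P "\<bar>j\<bar> + 1"] \<open>P > 0\<close> by simp
  then have "j + (\<bar>j\<bar> + 1) * P > 0" "j + (- (\<bar>j\<bar> + 1)) * P < 0"
    by linarith+
  then show "\<exists>n>0. c < dist (zact f f' n x) (zact f f' n y)"
    and "\<exists>n<0. c < dist (zact f f' n x) (zact f f' n y)"
    using shift by blast+
qed

lemma separated_pair_with_close_past:
  assumes "A \<subseteq> Y" "invariant_set (zact f f') A"
    and periodic: "\<And>z. z \<in> A \<Longrightarrow> finite (orbit (zact f f') z)"
    and "x \<in> A" "x islimpt A"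
  shows "\<exists>w\<in>A. \<exists>x'\<in>A. c < dist w x' \<and>
    (\<forall>m\<in>{1..N}. dist (zact f f' (- int m) w) (zact f f' (- int m) x') \<le> c)"
proof -
  obtain y where "y \<in> A" "y \<noteq> x"
    and close: "\<forall>i\<in>{1..N}. dist (zact f f' (int i) y) (zact f f' (int i) x) < c"
    by (rule islimpt_obtain_near_under_maps[of x A Y "{1..N}" c "\<lambda>i. zact f f' (int i)"])
      (use assms zact_continuous expansivity_const_pos in auto)
  have "x \<in> Y" "y \<in> Y"
    using assms \<open>y \<in> A\<close> by auto
  define separated where
    "separated n \<longleftrightarrow> 0 < n \<and> c < dist (zact f f' (int n) y) (zact f f' (int n) x)" for n
  obtain n0 :: int where "n0 > 0" "c < dist (zact f f' n0 y) (zact f f' n0 x)"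
    using periodic_points_separated_in_future_and_past(1) \<open>x \<in> Y\<close> \<open>y \<in> Y\<close> \<open>y \<noteq> x\<close>
      periodic \<open>x \<in> A\<close> \<open>y \<in> A\<close> by blast
  then have "separated (nat n0)"
    unfolding separated_def by simp
  then obtain n where n: "separated n" and before: "\<And>m. m < n \<Longrightarrow> \<not> separated m"
    using exists_least_iff[of separated] by blast
  have "N < n"
  proof (rule ccontr)
    assume "\<not> N < n"
    then have "n \<in> {1..N}"
      using n unfolding separated_def by auto
    then show False
      using n close unfolding separated_def by fastforce
  qed
  have "dist (zact f f' (- int m) (zact f f' n y)) (zact f f' (- int m) (zact f f' n x)) \<le> c"
    if "m \<in> {1..N}" for m
  proof -
    have "zact f f' (- int m) (zact f f' n z) = zact f f' (int (n - m)) z" if "z \<in> Y" for z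
      using zact_add[OF that, of "- int m" "int n"] \<open>m \<in> {1..N}\<close> \<open>N < n\<close>
      by (simp add: of_nat_diff)
    moreover have "\<not> separated (n - m)"
      using before \<open>m \<in> {1..N}\<close> \<open>N < n\<close> by simp
    ultimately show ?thesis
      using \<open>x \<in> Y\<close> \<open>y \<in> Y\<close> \<open>m \<in> {1..N}\<close> \<open>N < n\<close> unfolding separated_def by auto
  qed
  moreover have "zact f f' n y \<in> A" "zact f f' n x \<in> A"
    using assms \<open>y \<in> A\<close> unfolding invariant_set_def by blast+
  ultimately show ?thesis
    using n unfolding separated_def by blast
qed

lemma periodic_points_eq_if_close_in_past:
  assumes "x \<in> Y" "y \<in> Y" "finite (orbit (zact f f') x)" "finite (orbit (zact f f') y)"
    and "\<And>n. n < 0 \<Longrightarrow> dist (zact f f' n x) (zact f f' n y) \<le> c"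
  shows "x = y"
  using periodic_points_separated_in_future_and_past(2) assms by force

lemma compact_invariant_periodic_set_finite:
  assumes "compact A" "A \<subseteq> Y" "invariant_set (zact f f') A"
    and periodic: "\<And>z. z \<in> A \<Longrightarrow> finite (orbit (zact f f') z)"
  shows "finite A"
proof (rule ccontr)
  assume "infinite A"
  then obtain x where "x \<in> A" "x islimpt A"
    using \<open>compact A\<close> unfolding compact_eq_Bolzano_Weierstrass by blast
  define close_past where "close_past N p \<longleftrightarrow> p \<in> A \<times> A \<and> c < dist (fst p) (snd p) \<and>
      (\<forall>m\<in>{1..N}. dist (zact f f' (- int m) (fst p)) (zact f f' (- int m) (snd p)) \<le> c)"
    for N p
  have "\<forall>N. \<exists>p. close_past N p"
    using separated_pair_with_close_past[OF assms(2-4) \<open>x \<in> A\<close> \<open>x islimpt A\<close>]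
    unfolding close_past_def by fastforce
  then obtain p where p: "\<And>N. close_past N (p N)"
    by (metis choice)
  then have "\<forall>N. p N \<in> A \<times> A"
    unfolding close_past_def by blast
  then obtain l r where "l \<in> A \<times> A" "strict_mono r" and lim: "(p \<circ> r) \<longlonglongrightarrow> l"
    using compact_Times[OF \<open>compact A\<close> \<open>compact A\<close>] unfolding compact_def by blast
  define u v where "u = fst l" and "v = snd l"
  have "u \<in> Y" "v \<in> Y" "u \<in> A" "v \<in> A"
    using \<open>l \<in> A \<times> A\<close> \<open>A \<subseteq> Y\<close> unfolding u_def v_def by auto
  have "fst (p N) \<in> Y" "snd (p N) \<in> Y" for N
    using p[of N] \<open>A \<subseteq> Y\<close> unfolding close_past_def by auto
  then have limits: "(\<lambda>k. zact f f' n (fst (p (r k)))) \<longlonglongrightarrow> zact f f' n u"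
    "(\<lambda>k. zact f f' n (snd (p (r k)))) \<longlonglongrightarrow> zact f f' n v" for n
    using tendsto_fst[OF lim] tendsto_snd[OF lim] \<open>u \<in> Y\<close> \<open>v \<in> Y\<close>
    by (auto simp: u_def v_def o_def intro!: continuous_on_tendsto_compose[OF zact_continuous])
  have "dist (zact f f' n u) (zact f f' n v) \<le> c" if "n < 0" for n
  proof (rule LIMSEQ_le_const2[OF tendsto_dist[OF limits]], intro exI allI impI)
    fix k assume "nat (- n) \<le> k"
    then have "nat (- n) \<in> {1..r k}"
      using \<open>n < 0\<close> seq_suble[OF \<open>strict_mono r\<close>, of k] by auto
    then show "dist (zact f f' n (fst (p (r k)))) (zact f f' n (snd (p (r k)))) \<le> c"
      using p[of "r k"] \<open>n < 0\<close> unfolding close_past_def by force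
  qed
  then have "u = v"
    using periodic_points_eq_if_close_in_past \<open>u \<in> Y\<close> \<open>v \<in> Y\<close> periodic \<open>u \<in> A\<close> \<open>v \<in> A\<close>
    by blast
  moreover have "c \<le> dist u v"
    using LIMSEQ_le_const[OF tendsto_dist[OF limits[of 0]]] p
    unfolding close_past_def by (simp add: less_imp_le)
  ultimately show False
    using expansivity_const_pos by simp
qed

end

lemma expansive_weakly_CAM_imp_CAM:
  assumes "compact Y" "homeomorphism Y Y f f'" "expansive Y f f'" "weakly_CAM Y (zact f f')"
  shows "CAM Y (zact f f')"
proof -
  obtain c where "expansive_zsystem Y f f' c"
    using assms(2,3) unfolding expansive_def expansive_zsystem_def expansive_zsystem_axioms_def
      homeomorphic_zsystem_def by blast
  have "finite A"
    if "closedin (top_of_set Y) A" "A \<subset> Y" "invariant_set (zact f f') A" for A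
  proof -
    have "compact A"
      using closedin_compact[OF \<open>compact Y\<close>] that(1) .
    then show ?thesis
      using expansive_zsystem.compact_invariant_periodic_set_finite[OF \<open>expansive_zsystem Y f f' c\<close>]
        weakly_CAM_finite_orbit_in_proper_invariant[OF assms(4) compact_imp_closed] that
      by blast
  qed
  then show ?thesis
    using assms(4) unfolding weakly_CAM_def CAM_def by blast
qed

theorem proposition2p15:
  fixes X :: "'x::metric_space set" and T :: "'g::{group_add,countable} \<Rightarrow> 'x \<Rightarrow> 'x"
    and Y :: "'y::metric_space set" and f f' :: "'y \<Rightarrow> 'y"
  shows "(G_system X T \<and> CAM X T \<longrightarrow> weakly_CAM X T)
       \<and> (compact Y \<and> homeomorphism Y Y f f' \<and> expansive Y f f' \<and> weakly_CAM Y (zact f f')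
           \<longrightarrow> CAM Y (zact f f'))"
  using CAM_imp_weakly_CAM expansive_weakly_CAM_imp_CAM by blast

end
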